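(* For every $n$ there exist $n$ weighted sites in the Euclidean plane whose weighted order-$3$ Voronoi diagram has $\Omega(n^2)$ non-empty regions.
   Context: Site $s_i\in\mathbb R^2$ has weight $w_i>0$ and $\omega_i=w_i^{1/2}$; the weighted distance from $p$ to $s_i$ is $\|s_i-p\|_2/\omega_i$ (multiplicatively weighted). For $A\subseteq S$ with $|A|=3$, the order-$3$ Voronoi region of $A$ is the set of points $p$ for which there exists $r$ with $\|s_i-p\|_2\le\omega_i r$ for all $s_i\in A$ and $\|s_i-p\|_2>\omega_i r$ for all $s_i\notin A$. *)

theory Defs
  imports "HOL-Analysis.Analysis"
begin

text \<open>Sites are indexed by a finite index set I; site i is at s i in the Euclidean plane
  (real^2) with weight w i > 0, and omega_i = sqrt (w i). The weighted distance from p to s i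
  is dist (s i) p / sqrt (w i).\<close>

definition order_k_region ::
  "nat set \<Rightarrow> (nat \<Rightarrow> real^2) \<Rightarrow> (nat \<Rightarrow> real) \<Rightarrow> nat set \<Rightarrow> (real^2) set" where
  "order_k_region I s w A =
     {p. \<exists>r::real. (\<forall>i\<in>A. dist (s i) p \<le> sqrt (w i) * r) \<and>
                    (\<forall>i\<in>I - A. dist (s i) p > sqrt (w i) * r)}"

definition num_nonempty_order3_regions ::
  "nat set \<Rightarrow> (nat \<Rightarrow> real^2) \<Rightarrow> (nat \<Rightarrow> real) \<Rightarrow> nat" where
  "num_nonempty_order3_regions I s w =
     card {A. A \<subseteq> I \<and> card A = 3 \<and> order_k_region I s w A \<noteq> {}}"

end

theory Submission
  imports Defs
begin

text \<open>Put a heavy site above the origin, about n/2 light sites evenly spaced (gap \<sigma>) along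
  the positive x-axis, and about n/2 sites far below the axis whose weights make the squared
  weighted distance from a point (x, -t) to the site with parameter u equal to
  (2ux)^2 + (1 - t^2 + (u - t)^2)^2, which over the parameters u = l\<delta> is minimal exactly at u = t.
  At the point (i\<sigma>, -k\<delta>) just below light site i the squared weighted distance to the deep
  site k lies in [1/4, 2]; it is at most 1/4 for the heavy site and for light site i, at least 4
  for every other light site, and larger than for site k for every other deep site. So each pair
  (k, i) gives the non-empty order-3 region of {0, k, i}, and there are about n^2/4 such pairs.\<close>

lemma dist_vector2_sq:
  "dist (vector [a, b] :: real^2) (vector [c, d]) ^ 2 = (a - c)^2 + (b - d)^2"
  by (simp add: dist_vec_def L2_set_def sum_2 dist_real_def)

lemma order_k_region_memI:
  assumes "A \<subseteq> I" "\<And>j. j \<in> I \<Longrightarrow> w j > 0" "Q \<ge> 0"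
    and "\<And>j. j \<in> A \<Longrightarrow> dist (s j) p ^ 2 / w j \<le> Q"
    and "\<And>j. j \<in> I - A \<Longrightarrow> dist (s j) p ^ 2 / w j > Q"
  shows "p \<in> order_k_region I s w A"
  unfolding order_k_region_def
proof (intro CollectI exI[of _ "sqrt Q"] conjI ballI)
  fix j assume "j \<in> A"
  with assms have "dist (s j) p ^ 2 \<le> w j * Q" by (auto simp: divide_le_eq mult.commute)
  then show "dist (s j) p \<le> sqrt (w j) * sqrt Q"
    by (simp add: real_le_rsqrt flip: real_sqrt_mult)
next
  fix j assume "j \<in> I - A"
  with assms have "w j * Q < dist (s j) p ^ 2" by (auto simp: less_divide_eq mult.commute)
  then show "dist (s j) p > sqrt (w j) * sqrt Q"
    using real_sqrt_less_mono by (fastforce simp flip: real_sqrt_mult)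
qed

lemma card_mult_le_num_nonempty_order3_regions:
  assumes "finite I" "a \<in> I" "B \<subseteq> I" "C \<subseteq> I" "a \<notin> B" "a \<notin> C" "B \<inter> C = {}"
    and nonempty: "\<And>k i. k \<in> B \<Longrightarrow> i \<in> C \<Longrightarrow> order_k_region I s w {a, k, i} \<noteq> {}"
  shows "card B * card C \<le> num_nonempty_order3_regions I s w"
proof -
  let ?T = "{A. A \<subseteq> I \<and> card A = 3 \<and> order_k_region I s w A \<noteq> {}}"
  let ?f = "\<lambda>(k, i). {a, k, i}"
  have inj: "inj_on ?f (B \<times> C)"
  proof (rule inj_onI, clarify)
    fix k i k' i' assume "k \<in> B" "i \<in> C" "k' \<in> B" "i' \<in> C" and eq: "{a, k, i} = {a, k', i'}"
    then have "k \<in> {a, k', i'}" "i \<in> {a, k', i'}" by auto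
    with \<open>k \<in> B\<close> \<open>i \<in> C\<close> \<open>k' \<in> B\<close> \<open>i' \<in> C\<close> assms(5-7) show "k = k' \<and> i = i'" by auto
  qed
  have sub: "?f ` (B \<times> C) \<subseteq> ?T"
  proof (rule image_subsetI)
    fix x assume "x \<in> B \<times> C"
    then obtain k i where "x = (k, i)" "k \<in> B" "i \<in> C" by blast
    moreover from this assms(2-7) have "a \<noteq> k" "a \<noteq> i" "k \<noteq> i" "{a, k, i} \<subseteq> I" by auto
    ultimately show "?f x \<in> ?T" using nonempty by simp
  qed
  have "finite ?T"
    by (rule finite_subset[of _ "Pow I"]) (use \<open>finite I\<close> in auto)
  then have "card (B \<times> C) \<le> card ?T"
    using card_mono[OF _ sub] card_image[OF inj] by simp
  then show ?thesis
    by (simp add: num_nonempty_order3_regions_def card_cartesian_product)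
qed

definition disk_site :: "real \<Rightarrow> real^2" where
  "disk_site t = vector [0, - (1 + t^2) / (2 * t)]"

definition disk_value :: "real \<Rightarrow> real \<Rightarrow> real \<Rightarrow> real" where
  "disk_value t x y = (2 * t * x)^2 + (2 * t * y + 1 + t^2)^2"

lemma disk_site_sq_dist:
  assumes "t > 0"
  shows "dist (disk_site t) (vector [x, y]) ^ 2 * (2 * t)^2 = disk_value t x y"
  using assms unfolding disk_site_def dist_vector2_sq disk_value_def
  by (simp add: field_simps power2_eq_square)

lemma disk_site_inj:
  assumes "0 < t" "t < 1" "0 < u" "u < 1" "disk_site t = disk_site u"
  shows "t = u"
proof -
  have "- (1 + t^2) / (2 * t) = - (1 + u^2) / (2 * u)"
    using arg_cong[OF assms(5), of "\<lambda>v. v $ 2"] unfolding disk_site_def by simp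
  then have "(u - t) * (1 - t * u) = 0"
    using assms(1,3) by (simp add: field_simps power2_eq_square)
  moreover have "t * u < 1"
    using assms(1-4) mult_strict_mono[of t 1 u 1] by simp
  ultimately show ?thesis by simp
qed

lemma disk_site_below_axis:
  assumes "0 < t"
  shows "disk_site t $ 2 < 0"
proof -
  have "0 < 1 + t^2" by (simp add: add_pos_nonneg)
  then show ?thesis
    unfolding disk_site_def vector_2 using assms by (metis divide_neg_pos neg_less_0_iff_less mult_pos_pos zero_less_numeral)
qed

lemma disk_value_at_depth: "disk_value t x (- t) = (2 * t * x)^2 + (1 - t^2)^2"
  by (simp add: disk_value_def power2_eq_square algebra_simps)

lemma disk_value_at_depth_bounds:
  assumes "0 \<le> t" "t \<le> 1/2" "\<bar>x\<bar> \<le> 1"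
  shows "1/4 \<le> disk_value t x (- t)" "disk_value t x (- t) \<le> 2"
proof -
  have "t^2 \<le> 1/4" using assms(1,2) power_mono[of t "1/2" 2] by (simp add: power2_eq_square)
  then have "(1/2)^2 \<le> (1 - t^2)^2" "(1 - t^2)^2 \<le> 1"
    by (auto intro!: power_mono power_le_one)
  moreover have "(2 * t * x)^2 \<le> 1"
    using assms mult_mono[of "2 * t" 1 "\<bar>x\<bar>" 1] by (simp add: abs_square_le_1 abs_mult)
  moreover have "(1/2)^2 = (1/4 :: real)" by (simp add: power_divide)
  ultimately show "1/4 \<le> disk_value t x (- t)" "disk_value t x (- t) \<le> 2"
    using zero_le_power2[of "2 * t * x"] unfolding disk_value_at_depth by linarith+
qed

lemma disk_value_strict_min_at_depth:
  assumes "0 \<le> t" "0 \<le> u" "t \<le> 1/2" "u \<noteq> t" "8 * x^2 * (t + u) \<le> \<bar>u - t\<bar>"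
  shows "disk_value t x (- t) < disk_value u x (- t)"
proof -
  have diff: "disk_value u x (- t) - disk_value t x (- t)
      = 4 * x^2 * (t + u) * (u - t) + (u - t)^2 * (2 - 2 * t^2 + (u - t)^2)"
    by (simp add: disk_value_def power2_eq_square algebra_simps)
  have "t^2 \<le> 1/4" using assms(1,3) power_mono[of t "1/2" 2] by (simp add: power2_eq_square)
  then have "3/2 \<le> 2 - 2 * t^2 + (u - t)^2"
    using zero_le_power2[of "u - t"] by linarith
  then have "(u - t)^2 * (3/2) \<le> (u - t)^2 * (2 - 2 * t^2 + (u - t)^2)"
    by (rule mult_left_mono) simp
  moreover have "- ((u - t)^2 / 2) \<le> 4 * x^2 * (t + u) * (u - t)"
  proof -
    have "\<bar>4 * x^2 * (t + u) * (u - t)\<bar> = 4 * x^2 * (t + u) * \<bar>u - t\<bar>"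
      using assms(1,2) by (simp add: abs_mult)
    also have "\<dots> \<le> (\<bar>u - t\<bar> / 2) * \<bar>u - t\<bar>"
      using assms(5) by (intro mult_right_mono) auto
    also have "\<dots> = (u - t)^2 / 2"
      by (simp add: power2_eq_square)
    finally show ?thesis by linarith
  qed
  moreover have "(u - t)^2 > 0" using assms(4) by simp
  ultimately show ?thesis using diff by linarith
qed

text \<open>Site 0 is the heavy site, sites 1..m the deep sites and sites m+1..n-1 the light sites,
  where m = (n - 1) div 2. The choice \<delta> = \<sigma>/(4n) keeps every depth k\<delta> below \<sigma>/4, so the
  witness point under light site i stays well inside that site's weighted reach.\<close>

definition quad_sigma :: "nat \<Rightarrow> real" where
  "quad_sigma n = 1 / (4 * real n ^ 2)"

definition quad_delta :: "nat \<Rightarrow> real" where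
  "quad_delta n = quad_sigma n / (4 * real n)"

definition quad_mid :: "nat \<Rightarrow> nat" where
  "quad_mid n = (n - 1) div 2"

definition quad_site :: "nat \<Rightarrow> nat \<Rightarrow> real^2" where
  "quad_site n j =
    (if j = 0 then vector [0, 1]
     else if j \<le> quad_mid n then disk_site (real j * quad_delta n)
     else vector [real j * quad_sigma n, 0])"

definition quad_weight :: "nat \<Rightarrow> nat \<Rightarrow> real" where
  "quad_weight n j =
    (if j = 0 then 64
     else if j \<le> quad_mid n then 1 / (2 * real j * quad_delta n)^2
     else quad_sigma n ^ 2 / 4)"

lemma quad_params:
  assumes "0 < n" "j \<le> n"
  shows "0 < quad_sigma n" "0 < quad_delta n"
    "real j * quad_delta n \<le> quad_sigma n / 4" "quad_sigma n \<le> 1/4"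
    "real j * quad_sigma n \<le> 1 / (4 * real n)"
proof -
  have n: "real n \<ge> 1" "real j \<le> real n" using assms by auto
  show "0 < quad_sigma n" "0 < quad_delta n" using n by (simp_all add: quad_sigma_def quad_delta_def)
  have "real j * quad_delta n \<le> real n * quad_delta n"
    using n by (intro mult_right_mono) (auto simp: quad_sigma_def quad_delta_def)
  then show "real j * quad_delta n \<le> quad_sigma n / 4" using n by (simp add: quad_delta_def)
  show "quad_sigma n \<le> 1/4" using n by (simp add: quad_sigma_def field_simps)
  have "real j * quad_sigma n \<le> real n * quad_sigma n"
    using n by (intro mult_right_mono) (auto simp: quad_sigma_def)
  then show "real j * quad_sigma n \<le> 1 / (4 * real n)" using n by (simp add: quad_sigma_def power2_eq_square)
qed

lemma quad_weight_pos: "0 < n \<Longrightarrow> 0 < quad_weight n j"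
  using quad_params(1,2)[of n 0] by (simp add: quad_weight_def)

lemma quad_sq_dist_div_weight:
  assumes "0 < n"
  shows "dist (quad_site n j) (vector [x, y]) ^ 2 / quad_weight n j =
    (if j = 0 then (x^2 + (1 - y)^2) / 64
     else if j \<le> quad_mid n then disk_value (real j * quad_delta n) x y
     else 4 * ((real j * quad_sigma n - x)^2 + y^2) / quad_sigma n ^ 2)"
  using quad_params(1,2)[OF assms, of 0] disk_site_sq_dist[of "real j * quad_delta n" x y]
  by (auto simp: quad_site_def quad_weight_def dist_vector2_sq power2_commute field_simps)

lemma quad_site_inj:
  assumes "0 < n"
  shows "inj_on (quad_site n) {..<n}"
proof (rule inj_onI)
  fix i j assume "i \<in> {..<n}" "j \<in> {..<n}" and eq: "quad_site n i = quad_site n j"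
  have depth: "0 < real l * quad_delta n \<and> real l * quad_delta n < 1" if "0 < l" "l \<in> {..<n}" for l
    using quad_params[OF assms, of l] that by auto
  show "i = j"
  proof (cases "0 < i \<and> i \<le> quad_mid n \<and> 0 < j \<and> j \<le> quad_mid n")
    case True
    then have "real i * quad_delta n = real j * quad_delta n"
      using eq depth[of i] depth[of j] \<open>i \<in> {..<n}\<close> \<open>j \<in> {..<n}\<close>
      by (intro disk_site_inj) (auto simp: quad_site_def)
    then show ?thesis using quad_params(2)[OF assms, of 0] by simp
  next
    case False
    have "quad_site n i $ 1 = quad_site n j $ 1" "quad_site n i $ 2 = quad_site n j $ 2"
      using eq by simp_all
    with False show ?thesis
      using depth[of i] depth[of j] \<open>i \<in> {..<n}\<close> \<open>j \<in> {..<n}\<close> quad_params(1)[OF assms, of 0]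
        disk_site_below_axis[of "real i * quad_delta n"] disk_site_below_axis[of "real j * quad_delta n"]
      by (auto simp: quad_site_def split: if_splits)
  qed
qed

lemma point_site_sq_dist_ge:
  assumes "0 < \<sigma>" "i \<noteq> j"
  shows "4 \<le> 4 * ((real j * \<sigma> - real i * \<sigma>)^2 + y^2) / \<sigma>^2"
proof -
  have "1 \<le> (real j - real i)^2"
    using assms(2) abs_le_square_iff[of 1 "real j - real i"] by (cases "i < j") auto
  then have "\<sigma>^2 \<le> (real j - real i)^2 * \<sigma>^2"
    using mult_right_mono[of 1 "(real j - real i)^2" "\<sigma>^2"] by simp
  also have "\<dots> = (real j * \<sigma> - real i * \<sigma>)^2"
    by (simp add: power_mult_distrib flip: left_diff_distrib)
  finally have "\<sigma>^2 \<le> (real j * \<sigma> - real i * \<sigma>)^2 + y^2"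
    using zero_le_power2[of y] by linarith
  then show ?thesis using assms(1) by (simp add: field_simps)
qed

lemma quad_disk_separation:
  assumes "0 < n" "k \<le> n" "l \<le> n" "k \<noteq> l" "0 \<le> x" "x \<le> 1 / (4 * real n)"
  defines "t \<equiv> real k * quad_delta n"
  shows "disk_value t x (- t) < disk_value (real l * quad_delta n) x (- t)"
proof (rule disk_value_strict_min_at_depth)
  let ?u = "real l * quad_delta n"
  have \<delta>: "0 < quad_delta n" using quad_params(2)[OF assms(1), of 0] by simp
  have n: "1 \<le> real n" using assms(1) by simp
  show "0 \<le> t" "0 \<le> ?u" using \<delta> by (simp_all add: t_def)
  show "t \<le> 1/2" using quad_params(3,4)[OF assms(1,2)] by (simp add: t_def)
  show "?u \<noteq> t" using \<delta> assms(4) by (simp add: t_def)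
  have "x^2 \<le> (1 / (4 * real n))^2" using assms(6,5) by (rule power_mono)
  moreover have "t + ?u \<le> 2 * real n * quad_delta n"
    using assms(2,3) \<delta> mult_right_mono[of "real k + real l" "2 * real n" "quad_delta n"]
    by (simp add: t_def distrib_right)
  ultimately have "8 * x^2 * (t + ?u) \<le> 8 * (1 / (4 * real n))^2 * (2 * real n * quad_delta n)"
    using \<open>0 \<le> t\<close> \<open>0 \<le> ?u\<close> by (intro mult_mono mult_left_mono) auto
  also have "\<dots> \<le> quad_delta n"
    using n \<delta> by (simp add: field_simps power2_eq_square)
  also have "\<dots> \<le> \<bar>?u - t\<bar>"
    using \<delta> assms(4) by (simp add: t_def flip: left_diff_distrib) (simp add: abs_mult)
  finally show "8 * x^2 * (t + ?u) \<le> \<bar>?u - t\<bar>" .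
qed

lemma quad_region_nonempty:
  assumes "0 < k" "k \<le> quad_mid n" "quad_mid n < i" "i < n"
  shows "order_k_region {..<n} (quad_site n) (quad_weight n) {0, k, i} \<noteq> {}"
proof -
  have n: "0 < n" using assms by simp
  have "k \<le> n" "i \<le> n" using assms by simp_all
  define t where "t = real k * quad_delta n"
  define x where "x = real i * quad_sigma n"
  define Q where "Q = disk_value t x (- t)"
  note params = quad_params[OF n \<open>k \<le> n\<close>] quad_params[OF n \<open>i \<le> n\<close>]
  have t: "0 \<le> t" "t \<le> quad_sigma n / 4" "t \<le> 1/16"
    using params by (simp_all add: t_def)
  have "1 / (4 * real n) \<le> 1/4" using n by (simp add: field_simps)
  then have x: "0 \<le> x" "x \<le> 1 / (4 * real n)" "x \<le> 1/4"
    using params by (simp_all add: x_def)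
  have Q: "1/4 \<le> Q" "Q \<le> 2"
    using disk_value_at_depth_bounds[of t x] t x by (simp_all add: Q_def)
  note weighted = quad_sq_dist_div_weight[OF n, of _ x "- t"]
  have "vector [x, - t] \<in> order_k_region {..<n} (quad_site n) (quad_weight n) {0, k, i}"
  proof (rule order_k_region_memI[where Q = Q])
    show "{0, k, i} \<subseteq> {..<n}" "0 \<le> Q" using assms Q by auto
    show "\<And>j. 0 < quad_weight n j" using n by (rule quad_weight_pos)
  next
    fix j assume "j \<in> {0, k, i}"
    then consider "j = 0" | "j = k" | "j = i" by blast
    then show "dist (quad_site n j) (vector [x, - t]) ^ 2 / quad_weight n j \<le> Q"
    proof cases
      case 1
      have "x^2 \<le> 1" using x by (simp add: power_le_one)
      moreover have "(1 + t)^2 \<le> 2^2" using t by (intro power_mono) auto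
      ultimately show ?thesis using 1 weighted Q by simp
    next
      case 2
      then show ?thesis using assms weighted by (simp add: Q_def t_def)
    next
      case 3
      have "t^2 \<le> (quad_sigma n / 4)^2" using t by (intro power_mono)
      then have "4 * t^2 / quad_sigma n ^ 2 \<le> 1/4"
        using params by (simp add: field_simps power2_eq_square)
      then show ?thesis using 3 assms weighted Q by (simp add: x_def)
    qed
  next
    fix j assume j: "j \<in> {..<n} - {0, k, i}"
    show "Q < dist (quad_site n j) (vector [x, - t]) ^ 2 / quad_weight n j"
    proof (cases "j \<le> quad_mid n")
      case True
      then show ?thesis
        using j weighted quad_disk_separation[OF n \<open>k \<le> n\<close>, of j x] x by (simp add: Q_def t_def)
    next
      case False
      then show ?thesis
        using j assms weighted Q point_site_sq_dist_ge[OF params(1), of i j "- t"] by (simp add: x_def)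
    qed
  qed
  then show ?thesis by blast
qed

lemma quad_mid_product_ge:
  assumes "4 \<le> n"
  shows "(real n)^2 \<le> 16 * real (quad_mid n * (n - 1 - quad_mid n))"
proof -
  let ?m = "quad_mid n"
  have "n \<le> 4 * ?m" "?m \<le> n - 1 - ?m" using assms by (simp_all add: quad_mid_def)
  then have "n * n \<le> 16 * (?m * (n - 1 - ?m))"
    using mult_le_mono[of n "4 * ?m" n "4 * ?m"] mult_le_mono2[of ?m "n - 1 - ?m" ?m] by linarith
  then show ?thesis by (simp add: power2_eq_square flip: of_nat_mult of_nat_le_iff)
qed

theorem mainTheorem19:
  shows "\<exists>c::real. c > 0 \<and> (\<exists>N::nat. \<forall>n\<ge>N.
           \<exists>(s :: nat \<Rightarrow> real^2) (w :: nat \<Rightarrow> real).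
             inj_on s {..<n} \<and> (\<forall>i<n. w i > 0) \<and>
             real (num_nonempty_order3_regions {..<n} s w) \<ge> c * (real n)^2)"
proof (intro exI[of _ "1/16"] conjI exI[of _ 4] allI impI)
  fix n :: nat assume "4 \<le> n"
  let ?m = "quad_mid n"
  have "?m < n" using \<open>4 \<le> n\<close> by (simp add: quad_mid_def)
  have "card {1..?m} * card {?m<..<n} \<le> num_nonempty_order3_regions {..<n} (quad_site n) (quad_weight n)"
    using \<open>?m < n\<close> quad_region_nonempty
    by (intro card_mult_le_num_nonempty_order3_regions[where a = 0]) auto
  then have "real (?m * (n - 1 - ?m)) \<le> real (num_nonempty_order3_regions {..<n} (quad_site n) (quad_weight n))"
    unfolding of_nat_le_iff by simp
  then have "1/16 * (real n)^2 \<le> real (num_nonempty_order3_regions {..<n} (quad_site n) (quad_weight n))"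
    using quad_mid_product_ge[OF \<open>4 \<le> n\<close>] by linarith
  moreover have "inj_on (quad_site n) {..<n}" "\<forall>i<n. 0 < quad_weight n i"
    using \<open>4 \<le> n\<close> quad_site_inj quad_weight_pos by simp_all
  ultimately show "\<exists>(s :: nat \<Rightarrow> real^2) (w :: nat \<Rightarrow> real).
      inj_on s {..<n} \<and> (\<forall>i<n. w i > 0) \<and> real (num_nonempty_order3_regions {..<n} s w) \<ge> 1/16 * (real n)^2"
    by blast
qed simp

end
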